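(* Let $i=\lambda y.y$, and let $x$, $k$ be distinct variables. Then $\langle (\langle x\,i\rangle)\,(\mathcal{S}k.i)\rangle \simeq_{\mathrm{ctx}} \langle (\langle x\,i\rangle)\,((\langle x\,i\rangle)\,(\mathcal{S}k.i))\rangle$, but these two terms are not normal form bisimilar, i.e. $\langle (\langle x\,i\rangle)\,(\mathcal{S}k.i)\rangle \not\sim \langle (\langle x\,i\rangle)\,((\langle x\,i\rangle)\,(\mathcal{S}k.i))\rangle$.
   Context: The calculus $\lambda_{\mathcal S}$. Terms: $t ::= x \mid \lambda x.t \mid t\,t \mid \mathcal{S}k.t \mid \langle t\rangle$ ($\mathcal{S}$ is shift, $\langle\cdot\rangle$ is reset); values: $v ::= \lambda x.t \mid x$. Binders: $\lambda x.t$ binds $x$, $\mathcal{S}k.t$ binds $k$; terms up to $\alpha$-conversion; $\mathrm{fv}$, capture-avoiding substitution $t\{v/x\}$. Pure contexts $F ::= [\,] \mid v\,F \mid F\,t$; evaluation contexts $E ::= [\,] \mid v\,E \mid E\,t \mid \langle E\rangle$; general contexts $C ::= [\,] \mid \lambda x.C \mid t\,C \mid C\,t \mid \mathcal{S}k.C \mid \langle C\rangle$ (hole-filling may capture). Reduction: $E[(\lambda x.t)\,v] \to E[t\{v/x\}]$; $E[\langle F[\mathcal{S}k.t]\rangle] \to E[\langle t\{\lambda x.\langle F[x]\rangle/k\}\rangle]$ ($x\notin\mathrm{fv}(F)$); $E[\langle v\rangle]\to E[v]$. $t\Downarrow t'$ iff $t\to^*t'$ and $t'$ irreducible. Stuck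 term: not a value and irreducible; normal form: value or stuck; control stuck terms: $F[\mathcal{S}k.t]$; open stuck terms: $E[x\,v]$. Fresh: not free in the terms/contexts considered. Contextual equivalence $\simeq_{\mathrm{ctx}}$: $t_0\simeq_{\mathrm{ctx}}t_1$ iff for all contexts $C$ with $C[t_0],C[t_1]$ closed, $C[t_0]$ evaluates to a value iff... more precisely: $C[t_0]\Downarrow$ a value implies $C[t_1]\Downarrow$ a value, $C[t_0]\Downarrow$ a control stuck term implies $C[t_1]\Downarrow$ a control stuck term, and conversely. Normal form bisimilarity $\sim$. For $\mathcal R$ on terms, extend to evaluation contexts: $E_0\mathrel{\mathcal R}E_1$ iff either $E_0=E_0'[\langle F_0\rangle]$, $E_1=E_1'[\langle F_1\rangle]$ ($F_i$ pure) with $E_0'[x]\mathrel{\mathcal R}E_1'[x]$ and $\langle F_0[x]\rangle\mathrel{\mathcal R}\langle F_1[x]\rangle$ for fresh $x$, or $E_0=F_0$, $E_1=F_1$ pure with $F_0[x]\mathrel{\mathcal R}F_1[x]$ for fresh $x$. $v\mathbin{@}y$ is $x\,y$ if $v=x$ and $t\{y/x\}$ if $v=\lambda x.t$. $\mathcal R^{\mathrm{nf}}$ on normal forms: $v_0\mathrel{\mathcal R^{\mathrm{nf}}}v_1$ if $v_0\mathbin{@}x\mathrel{\mathcal R}v_1\mathbin{@}x$ ($x$ fresh); $F_0[\mathcal{S}k.t_0]\mathrel{\mathcal R^{\mathrm{nf}}}F_1[\mathcal{S}k.t_1]$ if $F_0\mathrel{\mathcal R}F_1$ and $\langle t_0\rangle\mathrel{\mathcal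 R}\langle t_1\rangle$; $E_0[x\,v_0]\mathrel{\mathcal R^{\mathrm{nf}}}E_1[x\,v_1]$ if $E_0\mathrel{\mathcal R}E_1$ and $v_0\mathrel{\mathcal R^{\mathrm{nf}}}v_1$. $\mathcal R$ is a normal form simulation if $t_0\mathrel{\mathcal R}t_1$, $t_0\Downarrow t_0'$ imply $t_1\Downarrow t_1'$ with $t_0'\mathrel{\mathcal R^{\mathrm{nf}}}t_1'$; a bisimulation if $\mathcal R$ and $\mathcal R^{-1}$ are simulations; $\sim$ is the largest normal form bisimulation. *)

theory Defs
  imports Main
begin

section \<open>Syntax of lambda_S (de Bruijn indices: terms are taken up to alpha-conversion)\<close>

text \<open>Var i is a variable (de Bruijn index); Lam t is lambda x.t (binds index 0 in t);
  Sft t is shift k.t (binds k as index 0 in t); Rst t is reset.\<close>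

datatype trm = Var nat | Lam trm | App trm trm | Sft trm | Rst trm

fun is_val :: "trm \<Rightarrow> bool" where
  "is_val (Var _) = True"
| "is_val (Lam _) = True"
| "is_val _ = False"

text \<open>Free variables (loose indices, expressed w.r.t. the outermost level).\<close>
fun fv :: "trm \<Rightarrow> nat set" where
  "fv (Var i) = {i}"
| "fv (Lam t) = (\<lambda>i. i - 1) ` (fv t - {0})"
| "fv (App t u) = fv t \<union> fv u"
| "fv (Sft t) = (\<lambda>i. i - 1) ` (fv t - {0})"
| "fv (Rst t) = fv t"

definition closed :: "trm \<Rightarrow> bool" where
  "closed t \<longleftrightarrow> fv t = {}"

fun lift :: "nat \<Rightarrow> trm \<Rightarrow> trm" where
  "lift k (Var i) = (if i < k then Var i else Var (Suc i))"
| "lift k (Lam t) = Lam (lift (Suc k) t)"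
| "lift k (App t u) = App (lift k t) (lift k u)"
| "lift k (Sft t) = Sft (lift (Suc k) t)"
| "lift k (Rst t) = Rst (lift k t)"

text \<open>Capture-avoiding substitution: subst t k s replaces index k by s and
  decrements the indices above k (the binder of k is removed).\<close>
fun subst :: "trm \<Rightarrow> nat \<Rightarrow> trm \<Rightarrow> trm" where
  "subst (Var i) k s = (if k < i then Var (i - 1) else if i = k then s else Var i)"
| "subst (Lam t) k s = Lam (subst t (Suc k) (lift 0 s))"
| "subst (App t u) k s = App (subst t k s) (subst u k s)"
| "subst (Sft t) k s = Sft (subst t (Suc k) (lift 0 s))"
| "subst (Rst t) k s = Rst (subst t k s)"

datatype ectx = EHole | EAppR trm ectx | EAppL ectx trm | ERst ectx

fun plugE :: "ectx \<Rightarrow> trm \<Rightarrow> trm" where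
  "plugE EHole t = t"
| "plugE (EAppR v E) t = App v (plugE E t)"
| "plugE (EAppL E u) t = App (plugE E t) u"
| "plugE (ERst E) t = Rst (plugE E t)"

fun ectx_ok :: "ectx \<Rightarrow> bool" where
  "ectx_ok EHole = True"
| "ectx_ok (EAppR v E) = (is_val v \<and> ectx_ok E)"
| "ectx_ok (EAppL E u) = ectx_ok E"
| "ectx_ok (ERst E) = ectx_ok E"

fun pure :: "ectx \<Rightarrow> bool" where
  "pure EHole = True"
| "pure (EAppR v E) = (is_val v \<and> pure E)"
| "pure (EAppL E u) = pure E"
| "pure (ERst E) = False"

fun compE :: "ectx \<Rightarrow> ectx \<Rightarrow> ectx" where
  "compE EHole E' = E'"
| "compE (EAppR v E) E' = EAppR v (compE E E')"
| "compE (EAppL E u) E' = EAppL (compE E E') u"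
| "compE (ERst E) E' = ERst (compE E E')"

fun liftE :: "nat \<Rightarrow> ectx \<Rightarrow> ectx" where
  "liftE k EHole = EHole"
| "liftE k (EAppR v E) = EAppR (lift k v) (liftE k E)"
| "liftE k (EAppL E u) = EAppL (liftE k E) (lift k u)"
| "liftE k (ERst E) = ERst (liftE k E)"

fun fvE :: "ectx \<Rightarrow> nat set" where
  "fvE EHole = {}"
| "fvE (EAppR v E) = fv v \<union> fvE E"
| "fvE (EAppL E u) = fvE E \<union> fv u"
| "fvE (ERst E) = fvE E"

inductive contr :: "trm \<Rightarrow> trm \<Rightarrow> bool" where
  beta: "is_val v \<Longrightarrow> contr (App (Lam t) v) (subst t 0 v)"
| shift: "pure F \<Longrightarrow>
     contr (Rst (plugE F (Sft t)))
           (Rst (subst t 0 (Lam (Rst (plugE (liftE 0 F) (Var 0))))))"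
| reset: "is_val v \<Longrightarrow> contr (Rst v) v"

definition step :: "trm \<Rightarrow> trm \<Rightarrow> bool" where
  "step t t' \<longleftrightarrow> (\<exists>E s s'. ectx_ok E \<and> contr s s' \<and> t = plugE E s \<and> t' = plugE E s')"

definition irreducible :: "trm \<Rightarrow> bool" where
  "irreducible t \<longleftrightarrow> \<not> (\<exists>t'. step t t')"

definition eval :: "trm \<Rightarrow> trm \<Rightarrow> bool" where
  "eval t t' \<longleftrightarrow> step\<^sup>*\<^sup>* t t' \<and> irreducible t'"

definition control_stuck :: "trm \<Rightarrow> bool" where
  "control_stuck t \<longleftrightarrow> (\<exists>F s. pure F \<and> t = plugE F (Sft s))"

datatype ctx = CHole | CLam ctx | CAppL ctx trm | CAppR trm ctx | CSft ctx | CRst ctx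

text \<open>Plugging is purely structural, so free variables of the plugged term may be
  captured by binders of the context (as in the paper).\<close>
fun plug :: "ctx \<Rightarrow> trm \<Rightarrow> trm" where
  "plug CHole t = t"
| "plug (CLam C) t = Lam (plug C t)"
| "plug (CAppL C u) t = App (plug C t) u"
| "plug (CAppR u C) t = App u (plug C t)"
| "plug (CSft C) t = Sft (plug C t)"
| "plug (CRst C) t = Rst (plug C t)"

definition ctx_equiv :: "trm \<Rightarrow> trm \<Rightarrow> bool" where
  "ctx_equiv t0 t1 \<longleftrightarrow>
     (\<forall>C. closed (plug C t0) \<and> closed (plug C t1) \<longrightarrow>
        ((\<exists>v. eval (plug C t0) v \<and> is_val v) \<longleftrightarrow> (\<exists>v. eval (plug C t1) v \<and> is_val v)) \<and>
        ((\<exists>s. eval (plug C t0) s \<and> control_stuck s) \<longleftrightarrow> (\<exists>s. eval (plug C t1) s \<and> control_stuck s)))"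

definition ectx_rel :: "(trm \<Rightarrow> trm \<Rightarrow> bool) \<Rightarrow> ectx \<Rightarrow> ectx \<Rightarrow> bool" where
  "ectx_rel R E0 E1 \<longleftrightarrow>
     (\<exists>E0' F0 E1' F1. ectx_ok E0' \<and> ectx_ok E1' \<and> pure F0 \<and> pure F1 \<and>
        E0 = compE E0' (ERst F0) \<and> E1 = compE E1' (ERst F1) \<and>
        (\<forall>x. x \<notin> fvE E0 \<union> fvE E1 \<longrightarrow>
           R (plugE E0' (Var x)) (plugE E1' (Var x)) \<and>
           R (Rst (plugE F0 (Var x))) (Rst (plugE F1 (Var x))))) \<or>
     (pure E0 \<and> pure E1 \<and>
        (\<forall>x. x \<notin> fvE E0 \<union> fvE E1 \<longrightarrow> R (plugE E0 (Var x)) (plugE E1 (Var x))))"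

fun app_at :: "trm \<Rightarrow> nat \<Rightarrow> trm" where
  "app_at (Var x) y = App (Var x) (Var y)"
| "app_at (Lam t) y = subst t 0 (Var y)"
| "app_at t y = App t (Var y)"

definition val_rel :: "(trm \<Rightarrow> trm \<Rightarrow> bool) \<Rightarrow> trm \<Rightarrow> trm \<Rightarrow> bool" where
  "val_rel R v0 v1 \<longleftrightarrow> is_val v0 \<and> is_val v1 \<and>
     (\<forall>x. x \<notin> fv v0 \<union> fv v1 \<longrightarrow> R (app_at v0 x) (app_at v1 x))"

text \<open>In the control-stuck clause, the bodies s0, s1 of the shifts have the captured
  continuation variable k as index 0 (the same k for both, as required).\<close>
definition nf_rel :: "(trm \<Rightarrow> trm \<Rightarrow> bool) \<Rightarrow> trm \<Rightarrow> trm \<Rightarrow> bool" where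
  "nf_rel R t0 t1 \<longleftrightarrow>
     val_rel R t0 t1 \<or>
     (\<exists>F0 F1 s0 s1. pure F0 \<and> pure F1 \<and> t0 = plugE F0 (Sft s0) \<and> t1 = plugE F1 (Sft s1) \<and>
        ectx_rel R F0 F1 \<and> R (Rst s0) (Rst s1)) \<or>
     (\<exists>E0 E1 x v0 v1. ectx_ok E0 \<and> ectx_ok E1 \<and>
        t0 = plugE E0 (App (Var x) v0) \<and> t1 = plugE E1 (App (Var x) v1) \<and>
        ectx_rel R E0 E1 \<and> val_rel R v0 v1)"

definition nf_sim :: "(trm \<Rightarrow> trm \<Rightarrow> bool) \<Rightarrow> bool" where
  "nf_sim R \<longleftrightarrow> (\<forall>t0 t1 t0'. R t0 t1 \<longrightarrow> eval t0 t0' \<longrightarrow> (\<exists>t1'. eval t1 t1' \<and> nf_rel R t0' t1'))"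

definition nf_bisim :: "(trm \<Rightarrow> trm \<Rightarrow> bool) \<Rightarrow> bool" where
  "nf_bisim R \<longleftrightarrow> nf_sim R \<and> nf_sim (conversep R)"

definition nf_bisimilar :: "trm \<Rightarrow> trm \<Rightarrow> bool" where
  "nf_bisimilar t0 t1 \<longleftrightarrow> (\<exists>R. nf_bisim R \<and> R t0 t1)"

definition I_trm :: trm where "I_trm = Lam (Var 0)"

end

theory Submission
  imports Defs
begin

text \<open>
  Call \<open>tower w n\<close> the term \<open>\<langle>w i\<rangle> (\<langle>w i\<rangle> (\<dots> (S k. i)))\<close> with \<open>n\<close> copies of \<open>\<langle>w i\<rangle>\<close>.
  In a closed program, a reset tower of positive height behaves independently of its height:
  the leftmost \<open>\<langle>w i\<rangle>\<close> is evaluated first and, the program being closed, either diverges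
  or returns a value (a reset never returns a control-stuck term); the remaining copies and the
  shift then collapse to \<open>i\<close>. So evaluation is simulated up to the congruence that identifies
  reset towers of positive height, which yields contextual equivalence.
  Normal form bisimilarity instead compares the open terms directly: both are stuck on \<open>x i\<close>,
  and relating their evaluation contexts forces \<open>\<langle>y (S k. i)\<rangle>\<close>, which evaluates to \<open>i\<close>,
  to be related to \<open>\<langle>y (\<langle>x i\<rangle> (S k. i))\<rangle>\<close>, which is stuck.
\<close>

lemma plugE_eq_Var_iff [simp]: "plugE E s = Var i \<longleftrightarrow> E = EHole \<and> s = Var i"
  by (cases E) auto
lemma plugE_eq_Lam_iff [simp]: "plugE E s = Lam b \<longleftrightarrow> E = EHole \<and> s = Lam b"
  by (cases E) auto
lemma plugE_eq_Sft_iff [simp]: "plugE E s = Sft b \<longleftrightarrow> E = EHole \<and> s = Sft b"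
  by (cases E) auto
lemma Var_eq_plugE_iff [simp]: "Var i = plugE E s \<longleftrightarrow> E = EHole \<and> s = Var i"
  by (cases E) auto
lemma Lam_eq_plugE_iff [simp]: "Lam b = plugE E s \<longleftrightarrow> E = EHole \<and> s = Lam b"
  by (cases E) auto
lemma Sft_eq_plugE_iff [simp]: "Sft b = plugE E s \<longleftrightarrow> E = EHole \<and> s = Sft b"
  by (cases E) auto

lemma Rst_eq_plugE_iff [simp]:
  "Rst u = plugE E s \<longleftrightarrow> (E = EHole \<and> s = Rst u) \<or> (\<exists>E'. E = ERst E' \<and> u = plugE E' s)"
  by (cases E) auto
lemma App_eq_plugE_iff [simp]:
  "App p q = plugE E s \<longleftrightarrow> (E = EHole \<and> s = App p q) \<or> (\<exists>E'. E = EAppL E' q \<and> p = plugE E' s)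
     \<or> (\<exists>E'. E = EAppR p E' \<and> q = plugE E' s)"
  by (cases E) auto

lemma is_val_plugE [simp]: "is_val (plugE E r) \<longleftrightarrow> E = EHole \<and> is_val r"
  by (cases E) auto

lemma plugE_compE: "plugE (compE E E') t = plugE E (plugE E' t)"
  by (induction E) auto

lemma ERst_eq_compE_iff:
  "ERst X = compE E E' \<longleftrightarrow> (E = EHole \<and> E' = ERst X) \<or> (\<exists>E1. E = ERst E1 \<and> X = compE E1 E')"
  by (cases E) auto
lemma EAppL_eq_compE_iff:
  "EAppL X u = compE E E' \<longleftrightarrow> (E = EHole \<and> E' = EAppL X u) \<or> (\<exists>E1. E = EAppL E1 u \<and> X = compE E1 E')"
  by (cases E) auto
lemma EHole_eq_compE_iff: "EHole = compE E E' \<longleftrightarrow> E = EHole \<and> E' = EHole"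
  by (cases E) auto

lemma plugE_inject: "plugE E s = plugE E t \<Longrightarrow> s = t"
  by (induction E) auto

lemma ectx_ok_compE: "ectx_ok E \<Longrightarrow> ectx_ok E' \<Longrightarrow> ectx_ok (compE E E')"
  by (induction E) auto

lemma pure_compE: "pure F \<Longrightarrow> pure F' \<Longrightarrow> pure (compE F F')"
  by (induction F) auto

lemma pure_imp_ectx_ok: "pure F \<Longrightarrow> ectx_ok F"
  by (induction F) auto

lemma plugE_liftE: "plugE (liftE k E) (lift k t) = lift k (plugE E t)"
  by (induction E) auto

lemma plugE_Sft_not_val: "\<not> is_val (plugE F (Sft b))"
  by (cases F) auto

lemma pure_plugE_Sft_neq_Rst: "pure F \<Longrightarrow> plugE F (Sft b) \<noteq> Rst u"
  by (cases F) auto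

lemma pure_plugE_Sft_inject:
  "pure F \<Longrightarrow> pure F' \<Longrightarrow> plugE F (Sft b) = plugE F' (Sft b') \<Longrightarrow> F = F' \<and> b = b'"
proof (induction F arbitrary: F')
  case EHole then show ?case by (cases F') auto
next
  case (EAppR v F) then show ?case by (cases F') (auto simp: plugE_Sft_not_val)
next
  case (EAppL F u) then show ?case by (cases F') (auto simp: plugE_Sft_not_val)
qed simp

lemma control_stuck_not_val: "control_stuck t \<Longrightarrow> \<not> is_val t"
  unfolding control_stuck_def using plugE_Sft_not_val by blast

lemma control_stuck_not_Rst: "\<not> control_stuck (Rst t)"
  unfolding control_stuck_def using pure_plugE_Sft_neq_Rst by metis

lemma contr_not_val: "contr s s' \<Longrightarrow> \<not> is_val s"
  by (induction rule: contr.induct) auto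

lemma contr_imp_step: "contr s s' \<Longrightarrow> step s s'"
  unfolding step_def by (rule exI[of _ EHole]) auto

lemma step_plugE: "step r r' \<Longrightarrow> ectx_ok E \<Longrightarrow> step (plugE E r) (plugE E r')"
  unfolding step_def by (metis ectx_ok_compE plugE_compE)

lemma steps_plugE: "step\<^sup>*\<^sup>* r r' \<Longrightarrow> ectx_ok E \<Longrightarrow> step\<^sup>*\<^sup>* (plugE E r) (plugE E r')"
  by (induction rule: rtranclp_induct) (auto intro: step_plugE rtranclp.rtrancl_into_rtrancl)

lemma relpowp_step_plugE:
  "(step ^^ n) r r' \<Longrightarrow> ectx_ok E \<Longrightarrow> (step ^^ n) (plugE E r) (plugE E r')"
proof (induction n arbitrary: r)
  case (Suc n)
  then obtain r1 where "step r r1" "(step ^^ n) r1 r'" using relpowp_Suc_D2 by metis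
  with Suc show ?case by (meson relpowp_Suc_I2 step_plugE)
qed simp

lemma irreducible_plugE_hole: "irreducible (plugE E r) \<Longrightarrow> ectx_ok E \<Longrightarrow> irreducible r"
  unfolding irreducible_def using step_plugE by blast

lemma eval_irreducible: "irreducible t \<Longrightarrow> eval t u \<longleftrightarrow> u = t"
  unfolding eval_def irreducible_def by (auto elim: converse_rtranclpE)

section \<open>Determinism\<close>

lemma pure_plugE_Sft_no_redex:
  "pure F \<Longrightarrow> ectx_ok E \<Longrightarrow> plugE F (Sft b) = plugE E s \<Longrightarrow> \<not> contr s s'"
proof (induction F arbitrary: E)
  case EHole
  then show ?case by (cases E) (auto elim: contr.cases)
next
  case (EAppR v F)
  then show ?case
    by (cases E) (auto simp: plugE_Sft_not_val elim: contr.cases dest: contr_not_val)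
next
  case (EAppL F u)
  then show ?case
    by (cases E) (auto simp: plugE_Sft_not_val elim: contr.cases dest: contr_not_val)
qed simp

lemma val_irreducible: "is_val v \<Longrightarrow> irreducible v"
  unfolding irreducible_def step_def using contr_not_val by fastforce

lemma control_stuck_irreducible: "control_stuck t \<Longrightarrow> irreducible t"
  unfolding irreducible_def step_def control_stuck_def by (metis pure_plugE_Sft_no_redex)

lemma redex_has_no_proper_subredex:
  "contr (plugE E r) s' \<Longrightarrow> ectx_ok E \<Longrightarrow> contr r r' \<Longrightarrow> E = EHole"
proof (induction "plugE E r" s' rule: contr.induct)
  case (shift F t)
  then show ?case
    by (cases E) (auto dest: contr_not_val pure_plugE_Sft_no_redex)
qed (cases E; auto dest: contr_not_val)+

lemma redex_decomposition_unique:
  "ectx_ok E \<Longrightarrow> ectx_ok E' \<Longrightarrow> contr s s1 \<Longrightarrow> contr r r1 \<Longrightarrow> plugE E s = plugE E' r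
   \<Longrightarrow> E = E' \<and> s = r"
proof (induction E arbitrary: E')
  case EHole
  then show ?case using redex_has_no_proper_subredex[of E' r s1 r1] by simp
next
  case (EAppR v E)
  then show ?case
    using redex_has_no_proper_subredex[of "EAppR v E" s r1 s1]
    by (cases E') (auto dest: contr_not_val)
next
  case (EAppL E u)
  then show ?case
    using redex_has_no_proper_subredex[of "EAppL E u" s r1 s1]
    by (cases E') (auto dest: contr_not_val)
next
  case (ERst E)
  then show ?case
    using redex_has_no_proper_subredex[of "ERst E" s r1 s1]
    by (cases E') auto
qed

lemma contr_deterministic: "contr s a \<Longrightarrow> contr s b \<Longrightarrow> a = b"
proof (induction rule: contr.induct)
  case (shift F t)
  from shift.prems show ?case
  proof cases
    case (shift F' t')
    with \<open>pure F\<close> pure_plugE_Sft_inject show ?thesis by blast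
  qed (use plugE_Sft_not_val in auto)
qed (auto elim: contr.cases simp: plugE_Sft_not_val)

lemma step_deterministic: "step t a \<Longrightarrow> step t b \<Longrightarrow> a = b"
  unfolding step_def using redex_decomposition_unique contr_deterministic by metis

lemma relpowp_step_prefix:
  "(step ^^ k) t s \<Longrightarrow> (step ^^ n) t u \<Longrightarrow> irreducible u \<Longrightarrow> k \<le> n \<and> (step ^^ (n - k)) s u"
proof (induction k arbitrary: t n)
  case (Suc k)
  then obtain t1 where t1: "step t t1" "(step ^^ k) t1 s"
    using relpowp_Suc_D2 by metis
  show ?case
  proof (cases n)
    case 0
    then show ?thesis using Suc.prems t1(1) unfolding irreducible_def by auto
  next
    case (Suc n')
    then obtain t2 where "step t t2" "(step ^^ n') t2 u"
      using \<open>(step ^^ n) t u\<close> relpowp_Suc_D2 by metis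
    with t1 Suc.IH Suc.prems(3) step_deterministic show ?thesis
      using \<open>n = Suc n'\<close> by fastforce
  qed
qed simp

lemma relpowp_plugE_hole_normalizes:
  "(step ^^ n) (plugE E r) u \<Longrightarrow> irreducible u \<Longrightarrow> ectx_ok E \<Longrightarrow> \<exists>m r'. (step ^^ m) r r' \<and> irreducible r'"
proof (induction n arbitrary: r)
  case 0
  then show ?case using irreducible_plugE_hole by (intro exI[of _ 0]) auto
next
  case (Suc n)
  show ?case
  proof (cases "irreducible r")
    case False
    then obtain r1 where "step r r1" unfolding irreducible_def by blast
    with Suc.prems have "(step ^^ n) (plugE E r1) u"
      by (metis relpowp_Suc_D2 step_deterministic step_plugE)
    with Suc.IH Suc.prems(2,3) obtain m r' where "(step ^^ m) r1 r'" "irreducible r'" by blast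
    with \<open>step r r1\<close> show ?thesis by (meson relpowp_Suc_I2)
  qed (intro exI[of _ 0], auto)
qed

section \<open>Closed terms\<close>

fun closed_below :: "nat \<Rightarrow> trm \<Rightarrow> bool" where
  "closed_below n (Var i) = (i < n)"
| "closed_below n (Lam t) = closed_below (Suc n) t"
| "closed_below n (App t u) = (closed_below n t \<and> closed_below n u)"
| "closed_below n (Sft t) = closed_below (Suc n) t"
| "closed_below n (Rst t) = closed_below n t"

lemma closed_below_iff_fv: "closed_below n t \<longleftrightarrow> (\<forall>i\<in>fv t. i < n)"
proof -
  have fv_binder: "(\<forall>i\<in>A - {0}. i - Suc 0 < n) \<longleftrightarrow> (\<forall>i\<in>A. i < Suc n)" for A n
    by force
  show ?thesis by (induction t arbitrary: n) (auto simp: fv_binder)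
qed

lemma closed_iff_closed_below_0: "closed t \<longleftrightarrow> closed_below 0 t"
  unfolding closed_def closed_below_iff_fv by auto

lemma closed_below_lift: "closed_below n t \<Longrightarrow> closed_below (Suc n) (lift k t)"
  by (induction t arbitrary: n k) auto

lemma closed_below_subst:
  "closed_below (Suc n) t \<Longrightarrow> closed_below n s \<Longrightarrow> k \<le> n \<Longrightarrow> closed_below n (subst t k s)"
  by (induction t arbitrary: n k s) (auto simp: closed_below_lift)

lemma closed_below_plugE_hole: "closed_below n (plugE E s) \<Longrightarrow> closed_below n s"
  by (induction E) auto

lemma closed_below_plugE_replace:
  "closed_below n (plugE E s) \<Longrightarrow> closed_below n s' \<Longrightarrow> closed_below n (plugE E s')"
  by (induction E) auto

lemma contr_closed_below: "contr s s' \<Longrightarrow> closed_below n s \<Longrightarrow> closed_below n s'"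
proof (induction rule: contr.induct)
  case (beta v t)
  then show ?case by (auto intro: closed_below_subst)
next
  case (shift F t)
  have "closed_below (Suc n) (lift 0 (plugE F (Sft t)))"
    using shift.prems closed_below_lift by simp
  then have "closed_below (Suc n) (plugE (liftE 0 F) (Var 0))"
    unfolding plugE_liftE[symmetric] using closed_below_plugE_replace by fastforce
  moreover have "closed_below (Suc n) t"
    using shift.prems closed_below_plugE_hole[of n F "Sft t"] by simp
  ultimately show ?case by (auto intro: closed_below_subst)
qed simp

lemma steps_closed_below: "step\<^sup>*\<^sup>* t t' \<Longrightarrow> closed_below n t \<Longrightarrow> closed_below n t'"
proof (induction rule: rtranclp_induct)
  case (step t' t'')
  then show ?case unfolding step_def
    by (metis closed_below_plugE_hole closed_below_plugE_replace contr_closed_below)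
qed

lemma closed_irreducible_cases:
  "closed_below 0 t \<Longrightarrow> irreducible t \<Longrightarrow> is_val t \<or> control_stuck t"
proof (induction t)
  case (Sft t)
  then show ?case unfolding control_stuck_def by (intro disjI2 exI[of _ EHole]) auto
next
  case (App t1 t2)
  have "irreducible t1" using irreducible_plugE_hole[of "EAppL EHole t2" t1] App.prems by simp
  with App consider "control_stuck t1" | b where "t1 = Lam b" by (cases t1) auto
  then show ?case
  proof cases
    case 1
    then obtain F s where "pure F" "t1 = plugE F (Sft s)" unfolding control_stuck_def by blast
    then show ?thesis unfolding control_stuck_def
      by (intro disjI2 exI[of _ "EAppL F t2"]) auto
  next
    case (2 b)
    have "irreducible t2" using irreducible_plugE_hole[of "EAppR t1 EHole" t2] App.prems 2 by simp
    with App consider "is_val t2" | "control_stuck t2" by auto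
    then show ?thesis
    proof cases
      case 1
      then have "step (App t1 t2) (subst b 0 t2)" using 2 contr_imp_step contr.beta by simp
      then show ?thesis using App.prems unfolding irreducible_def by blast
    next
      case 2
      then obtain F s where "pure F" "t2 = plugE F (Sft s)" unfolding control_stuck_def by blast
      then show ?thesis unfolding control_stuck_def using \<open>t1 = Lam b\<close>
        by (intro disjI2 exI[of _ "EAppR t1 F"]) auto
    qed
  qed
next
  case (Rst t)
  have "irreducible t" using irreducible_plugE_hole[of "ERst EHole" t] Rst.prems by simp
  with Rst have "is_val t \<or> control_stuck t" by simp
  then have "\<exists>t'. step (Rst t) t'"
    unfolding control_stuck_def using contr_imp_step contr.reset contr.shift by blast
  then show ?case using Rst.prems unfolding irreducible_def by blast
qed auto

lemma step_from_Rst: "step (Rst s) r \<Longrightarrow> (\<exists>s'. r = Rst s') \<or> is_val r"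
proof -
  assume "step (Rst s) r"
  then obtain E u u' where "contr u u'" "Rst s = plugE E u" "r = plugE E u'"
    unfolding step_def by blast
  then show ?thesis by (cases E) (auto elim: contr.cases)
qed

lemma steps_from_Rst: "step\<^sup>*\<^sup>* (Rst s) r \<Longrightarrow> (\<exists>s'. r = Rst s') \<or> is_val r"
proof (induction rule: rtranclp_induct)
  case (step r r')
  then show ?case
    using step_from_Rst val_irreducible unfolding irreducible_def by blast
qed simp

lemma closed_Rst_normal_form_is_val:
  "step\<^sup>*\<^sup>* (Rst s) r \<Longrightarrow> irreducible r \<Longrightarrow> closed_below 0 s \<Longrightarrow> is_val r"
  using steps_closed_below[of "Rst s" r 0] closed_irreducible_cases steps_from_Rst control_stuck_not_Rst
  by fastforce

section \<open>Towers\<close>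

text \<open>With \<open>w = Var x\<close> the two terms of the proposition are \<open>Rst (tower w 1)\<close> and \<open>Rst (tower w 2)\<close>.\<close>

fun tower :: "trm \<Rightarrow> nat \<Rightarrow> trm" where
  "tower w 0 = Sft I_trm"
| "tower w (Suc n) = App (Rst (App w I_trm)) (tower w n)"

lemma lift_I_trm [simp]: "lift k I_trm = I_trm"
  by (simp add: I_trm_def)
lemma subst_I_trm [simp]: "subst I_trm k s = I_trm"
  by (simp add: I_trm_def)
lemma lift_tower [simp]: "lift k (tower w n) = tower (lift k w) n"
  by (induction n) auto
lemma subst_tower [simp]: "subst (tower w n) k s = tower (subst w k s) n"
  by (induction n) auto

inductive tower_cong :: "trm \<Rightarrow> trm \<Rightarrow> bool" where
  var: "tower_cong (Var i) (Var i)"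
| lam: "tower_cong t t' \<Longrightarrow> tower_cong (Lam t) (Lam t')"
| app: "tower_cong t t' \<Longrightarrow> tower_cong u u' \<Longrightarrow> tower_cong (App t u) (App t' u')"
| sft: "tower_cong t t' \<Longrightarrow> tower_cong (Sft t) (Sft t')"
| rst: "tower_cong t t' \<Longrightarrow> tower_cong (Rst t) (Rst t')"
| tower: "tower_cong w w' \<Longrightarrow> tower_cong (Rst (tower w (Suc a))) (Rst (tower w' (Suc b)))"

inductive tower_cong_ctx :: "ectx \<Rightarrow> ectx \<Rightarrow> bool" where
  "tower_cong_ctx EHole EHole"
| "tower_cong v v' \<Longrightarrow> tower_cong_ctx E E' \<Longrightarrow> tower_cong_ctx (EAppR v E) (EAppR v' E')"
| "tower_cong_ctx E E' \<Longrightarrow> tower_cong u u' \<Longrightarrow> tower_cong_ctx (EAppL E u) (EAppL E' u')"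
| "tower_cong_ctx E E' \<Longrightarrow> tower_cong_ctx (ERst E) (ERst E')"

inductive_cases tower_cong_LamE: "tower_cong (Lam t) t'"
inductive_cases tower_cong_AppE: "tower_cong (App t u) t'"
inductive_cases tower_cong_SftE: "tower_cong (Sft t) t'"
inductive_cases tower_cong_RstE: "tower_cong (Rst t) t'"

lemma tower_cong_refl: "tower_cong t t"
  by (induction t) (auto intro: tower_cong.intros)

lemma tower_cong_sym: "tower_cong t t' \<Longrightarrow> tower_cong t' t"
proof (induction rule: tower_cong.induct)
  case (tower w w' a b)
  then show ?case using tower_cong.tower[of w' w b a] by simp
qed (auto intro: tower_cong.intros)

lemma tower_cong_val: "tower_cong v v' \<Longrightarrow> is_val v \<Longrightarrow> is_val v'"
  by (cases rule: tower_cong.cases) auto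

lemma tower_cong_plug: "tower_cong r r' \<Longrightarrow> tower_cong (plug C r) (plug C r')"
  by (induction C) (auto intro: tower_cong.intros tower_cong_refl)

lemma tower_cong_lift: "tower_cong t t' \<Longrightarrow> tower_cong (lift k t) (lift k t')"
proof (induction arbitrary: k rule: tower_cong.induct)
  case (tower w w' a b)
  then show ?case using tower_cong.tower[of "lift k w" "lift k w'"] by simp
qed (auto intro: tower_cong.intros)

lemma tower_cong_subst:
  "tower_cong t t' \<Longrightarrow> tower_cong s s' \<Longrightarrow> tower_cong (subst t k s) (subst t' k s')"
proof (induction arbitrary: k s s' rule: tower_cong.induct)
  case (tower w w' a b)
  then show ?case using tower_cong.tower[of "subst w k s" "subst w' k s'"] by simp
qed (simp_all add: tower_cong.intros tower_cong_lift)

lemma tower_cong_ctx_plugE: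
  "tower_cong_ctx E E' \<Longrightarrow> tower_cong r r' \<Longrightarrow> tower_cong (plugE E r) (plugE E' r')"
  by (induction rule: tower_cong_ctx.induct) (auto intro: tower_cong.intros)

lemma tower_cong_ctx_ectx_ok: "tower_cong_ctx E E' \<Longrightarrow> ectx_ok E \<Longrightarrow> ectx_ok E'"
  by (induction rule: tower_cong_ctx.induct) (auto dest: tower_cong_val)

lemma tower_cong_ctx_liftE: "tower_cong_ctx E E' \<Longrightarrow> tower_cong_ctx (liftE k E) (liftE k E')"
  by (induction rule: tower_cong_ctx.induct) (auto intro: tower_cong_ctx.intros tower_cong_lift)

lemma tower_cong_pure_plugE_Sft:
  "pure F \<Longrightarrow> tower_cong (plugE F (Sft b)) u \<Longrightarrow>
   \<exists>F' b'. u = plugE F' (Sft b') \<and> pure F' \<and> tower_cong_ctx F F' \<and> tower_cong b b'"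
proof (induction F arbitrary: u)
  case EHole
  then show ?case by (auto elim!: tower_cong_SftE intro!: exI[of _ EHole] tower_cong_ctx.intros)
next
  case (EAppR v F)
  then obtain v' X where "u = App v' X" "tower_cong v v'" "tower_cong (plugE F (Sft b)) X"
    by (auto elim: tower_cong_AppE)
  moreover obtain F' b' where
    "X = plugE F' (Sft b')" "pure F'" "tower_cong_ctx F F'" "tower_cong b b'"
    using EAppR.IH[of X] EAppR.prems(1) \<open>tower_cong (plugE F (Sft b)) X\<close> by auto
  ultimately show ?case using EAppR.prems
    by (intro exI[of _ "EAppR v' F'"] exI[of _ b']) (auto intro: tower_cong_ctx.intros dest: tower_cong_val)
next
  case (EAppL F w)
  then obtain X w' where "u = App X w'" "tower_cong (plugE F (Sft b)) X" "tower_cong w w'"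
    by (auto elim: tower_cong_AppE)
  moreover obtain F' b' where
    "X = plugE F' (Sft b')" "pure F'" "tower_cong_ctx F F'" "tower_cong b b'"
    using EAppL.IH[of X] EAppL.prems(1) \<open>tower_cong (plugE F (Sft b)) X\<close> by auto
  ultimately show ?case
    by (intro exI[of _ "EAppL F' w'"] exI[of _ b']) (auto intro: tower_cong_ctx.intros)
qed simp

lemma pure_plugE_Sft_neq_tower: "pure F \<Longrightarrow> plugE F (Sft b) \<noteq> tower w (Suc a)"
  by (cases F) (auto dest: pure_plugE_Sft_neq_Rst)

lemma contr_tower_cong:
  "contr s s2 \<Longrightarrow> tower_cong s s1 \<Longrightarrow> \<exists>s2'. contr s1 s2' \<and> tower_cong s2 s2'"
proof (induction rule: contr.induct)
  case (beta v t)
  then obtain t' v' where "s1 = App (Lam t') v'" "tower_cong t t'" "tower_cong v v'"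
    by (elim tower_cong_AppE tower_cong_LamE) auto
  with beta.hyps show ?case
    by (auto intro!: contr.beta tower_cong_subst dest: tower_cong_val)
next
  case (shift F t)
  then obtain u where "s1 = Rst u" "tower_cong (plugE F (Sft t)) u"
    using pure_plugE_Sft_neq_tower by (auto elim: tower_cong_RstE)
  with shift.hyps obtain F' t' where F': "u = plugE F' (Sft t')" "pure F'"
    "tower_cong_ctx F F'" "tower_cong t t'"
    using tower_cong_pure_plugE_Sft by blast
  have "tower_cong (Lam (Rst (plugE (liftE 0 F) (Var 0)))) (Lam (Rst (plugE (liftE 0 F') (Var 0))))"
    by (intro tower_cong.intros tower_cong_ctx_plugE tower_cong_ctx_liftE F')
  with F' \<open>s1 = Rst u\<close> show ?case
    by (auto intro!: contr.shift tower_cong.intros tower_cong_subst)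
next
  case (reset v)
  then obtain v' where "s1 = Rst v'" "tower_cong v v'"
    by (cases v) (auto elim: tower_cong_RstE)
  with reset.hyps show ?case by (metis contr.reset tower_cong_val)
qed

text \<open>The simulation case in which \<open>t'\<close> need not take a matching step: the redex of \<open>t\<close> lies
  inside a tower.\<close>

definition towers_in_ctx :: "trm \<Rightarrow> trm \<Rightarrow> bool" where
  "towers_in_ctx t t' \<longleftrightarrow> (\<exists>E E' w w' a b. ectx_ok E \<and> tower_cong_ctx E E' \<and> tower_cong w w' \<and>
     t = plugE E (Rst (tower w (Suc a))) \<and> t' = plugE E' (Rst (tower w' (Suc b))))"

lemma tower_cong_ctx_compE:
  "tower_cong_ctx E E' \<Longrightarrow> tower_cong_ctx E1 E1' \<Longrightarrow> tower_cong_ctx (compE E E1) (compE E' E1')"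
  by (induction rule: tower_cong_ctx.induct) (auto intro: tower_cong_ctx.intros)

lemma towers_in_ctx_plugE:
  "towers_in_ctx t t' \<Longrightarrow> tower_cong_ctx E E' \<Longrightarrow> ectx_ok E \<Longrightarrow>
   towers_in_ctx (plugE E t) (plugE E' t')"
  unfolding towers_in_ctx_def by (metis plugE_compE ectx_ok_compE tower_cong_ctx_compE)

lemma tower_cong_plugE_cases_under_ctx:
  assumes "(\<exists>E1' s'. t' = plugE E1' s' \<and> tower_cong_ctx E1 E1' \<and> tower_cong s s') \<or>
      towers_in_ctx (plugE E1 s) t'"
    and "tower_cong_ctx E E'" "ectx_ok E"
  shows "(\<exists>E1' s'. plugE E' t' = plugE E1' s' \<and> tower_cong_ctx (compE E E1) E1' \<and> tower_cong s s') \<or>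
      towers_in_ctx (plugE E (plugE E1 s)) (plugE E' t')"
  using assms by (metis plugE_compE tower_cong_ctx_compE towers_in_ctx_plugE)

lemma tower_cong_plugE_cases:
  "tower_cong (plugE E s) t' \<Longrightarrow> ectx_ok E \<Longrightarrow>
   (\<exists>E' s'. t' = plugE E' s' \<and> tower_cong_ctx E E' \<and> tower_cong s s') \<or> towers_in_ctx (plugE E s) t'"
proof (induction E arbitrary: t')
  case EHole
  then show ?case by (intro disjI1 exI[of _ EHole]) (auto intro: tower_cong_ctx.intros)
next
  case (EAppR v E)
  then obtain v' X where "t' = App v' X" "tower_cong v v'" "tower_cong (plugE E s) X"
    by (auto elim: tower_cong_AppE)
  with EAppR show ?case
    using tower_cong_plugE_cases_under_ctx[of X E s "EAppR v EHole" "EAppR v' EHole"]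
    by (auto intro: tower_cong_ctx.intros)
next
  case (EAppL E u)
  then obtain X u' where "t' = App X u'" "tower_cong (plugE E s) X" "tower_cong u u'"
    by (auto elim: tower_cong_AppE)
  with EAppL show ?case
    using tower_cong_plugE_cases_under_ctx[of X E s "EAppL EHole u" "EAppL EHole u'"]
    by (auto intro: tower_cong_ctx.intros)
next
  case (ERst E)
  from ERst.prems(1) consider X where "t' = Rst X" "tower_cong (plugE E s) X"
    | w w' a b where "plugE E s = tower w (Suc a)" "t' = Rst (tower w' (Suc b))" "tower_cong w w'"
    by (auto elim: tower_cong_RstE)
  then show ?case
  proof cases
    case 1
    with ERst show ?thesis
      using tower_cong_plugE_cases_under_ctx[of X E s "ERst EHole" "ERst EHole"]
      by (auto intro: tower_cong_ctx.intros)
  next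
    case 2
    then have "towers_in_ctx (plugE (ERst E) s) t'"
      unfolding towers_in_ctx_def
      by (intro exI[of _ EHole]) (auto intro: tower_cong_ctx.intros)
    then show ?thesis ..
  qed
qed

lemma tower_cong_step:
  assumes "step t t2" "tower_cong t t'"
  shows "(\<exists>t2'. step t' t2' \<and> tower_cong t2 t2') \<or> towers_in_ctx t t'"
proof -
  obtain E s s2 where E: "ectx_ok E" "contr s s2" "t = plugE E s" "t2 = plugE E s2"
    using assms(1) unfolding step_def by blast
  from tower_cong_plugE_cases[of E s t'] assms(2) E(1,3)
  have "(\<exists>E' s'. t' = plugE E' s' \<and> tower_cong_ctx E E' \<and> tower_cong s s') \<or> towers_in_ctx t t'"
    by simp
  then show ?thesis
  proof (elim disjE exE conjE)
    fix E' s' assume "t' = plugE E' s'" "tower_cong_ctx E E'" "tower_cong s s'"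
    moreover obtain s2' where "contr s' s2'" "tower_cong s2 s2'"
      using contr_tower_cong E(2) \<open>tower_cong s s'\<close> by blast
    ultimately show ?thesis using E
      by (meson contr_imp_step step_plugE tower_cong_ctx_ectx_ok tower_cong_ctx_plugE)
  qed simp
qed

lemma tower_collapses:
  "step\<^sup>*\<^sup>* (Rst (App w I_trm)) v \<Longrightarrow> is_val v \<Longrightarrow> pure F \<Longrightarrow>
   step\<^sup>*\<^sup>* (Rst (plugE F (tower w n))) I_trm"
proof (induction n arbitrary: F)
  case 0
  then have "step (Rst (plugE F (Sft I_trm))) (Rst I_trm)"
    using contr.shift[of F I_trm] contr_imp_step by simp
  moreover have "step (Rst I_trm) I_trm"
    using contr.reset[of I_trm] contr_imp_step by (simp add: I_trm_def)
  ultimately show ?case by simp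
next
  case (Suc n)
  define E where "E = ERst (compE F (EAppL EHole (tower w n)))"
  have "ectx_ok E" unfolding E_def using Suc.prems(3) by (simp add: ectx_ok_compE pure_imp_ectx_ok)
  then have "step\<^sup>*\<^sup>* (plugE E (Rst (App w I_trm))) (plugE E v)"
    using Suc.prems(1) steps_plugE by blast
  moreover have "step\<^sup>*\<^sup>* (Rst (plugE (compE F (EAppR v EHole)) (tower w n))) I_trm"
    using Suc by (simp add: pure_compE)
  ultimately show ?case unfolding E_def by (simp add: plugE_compE)
qed

lemma tower_eval_split:
  assumes u: "(step ^^ n) (plugE E (Rst (tower w (Suc a)))) u" "irreducible u"
    and E: "ectx_ok E" and closed: "closed_below 0 (plugE E (Rst (tower w (Suc a))))"
  obtains m v k where "(step ^^ m) (Rst (App w I_trm)) v" "is_val v" "m < n"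
    "(step ^^ k) (plugE E I_trm) u" "k < n"
proof -
  define Ew where "Ew = compE E (ERst (EAppL EHole (tower w a)))"
  have Ew: "ectx_ok Ew" "plugE Ew (Rst (App w I_trm)) = plugE E (Rst (tower w (Suc a)))"
    unfolding Ew_def using E by (simp_all add: ectx_ok_compE plugE_compE)
  obtain m v where m: "(step ^^ m) (Rst (App w I_trm)) v" "irreducible v"
    using relpowp_plugE_hole_normalizes Ew u by metis
  have "closed_below 0 (App w I_trm)"
    using closed closed_below_plugE_hole Ew(2) by (metis closed_below.simps(5))
  then have v: "is_val v"
    using m closed_Rst_normal_form_is_val relpowp_imp_rtranclp by metis
  have "step\<^sup>*\<^sup>* (Rst (plugE (EAppR v EHole) (tower w a))) I_trm"
    using tower_collapses[OF relpowp_imp_rtranclp[OF m(1)] v, of "EAppR v EHole"] v by simp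
  then have "step\<^sup>*\<^sup>* (plugE Ew v) (plugE E I_trm)"
    unfolding Ew_def using E by (simp add: plugE_compE steps_plugE)
  then obtain j where j: "(step ^^ j) (plugE Ew v) (plugE E I_trm)"
    by (metis rtranclp_power)
  have "plugE Ew v \<noteq> plugE E I_trm"
    unfolding Ew_def plugE_compE by (auto simp: I_trm_def dest: plugE_inject)
  with j have "j > 0" by (cases j) auto
  have "(step ^^ (m + j)) (plugE E (Rst (tower w (Suc a)))) (plugE E I_trm)"
    using relpowp_step_plugE[OF m(1) Ew(1)] j Ew(2) unfolding relpowp_add by auto
  with relpowp_step_prefix u have "m + j \<le> n" "(step ^^ (n - (m + j))) (plugE E I_trm) u"
    by blast+
  with m(1) v \<open>j > 0\<close> show ?thesis
    by (intro that[of m v "n - (m + j)"]) auto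
qed

section \<open>Simulation up to towers\<close>

lemma tower_cong_normal_form:
  assumes "closed_below 0 t" "irreducible t" "tower_cong t t'"
  shows "irreducible t' \<and> (is_val t \<longrightarrow> is_val t') \<and> (control_stuck t \<longrightarrow> control_stuck t')"
  using closed_irreducible_cases[OF assms(1,2)]
proof
  assume "is_val t"
  with assms(3) show ?thesis
    using tower_cong_val val_irreducible control_stuck_not_val by blast
next
  assume "control_stuck t"
  with assms(3) have "control_stuck t'"
    unfolding control_stuck_def using tower_cong_pure_plugE_Sft by blast
  with \<open>control_stuck t\<close> show ?thesis
    using control_stuck_irreducible control_stuck_not_val by blast
qed

text \<open>Induction on the length of the evaluation: in the tower case the induction hypothesis is used
  for the evaluation of \<open>\<langle>w i\<rangle>\<close> and for the evaluation after the collapse, neither of which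
  is a single step.\<close>

lemma tower_cong_eval_sim:
  "(step ^^ n) t u \<Longrightarrow> irreducible u \<Longrightarrow> closed_below 0 t \<Longrightarrow> tower_cong t t' \<Longrightarrow>
   \<exists>u'. eval t' u' \<and> (is_val u \<longrightarrow> is_val u') \<and> (control_stuck u \<longrightarrow> control_stuck u')"
proof (induction n arbitrary: t t' u rule: less_induct)
  case (less n)
  note steps = less.prems(1) and u = less.prems(2) and closed = less.prems(3) and cong = less.prems(4)
  show ?case
  proof (cases "irreducible t")
    case True
    with steps have "u = t"
      unfolding irreducible_def by (metis relpowp_E2)
    with True closed cong show ?thesis
      using tower_cong_normal_form unfolding eval_def by blast
  next
    case False
    then obtain t2 where "step t t2" unfolding irreducible_def by blast
    from tower_cong_step[OF this cong] show ?thesis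
    proof (elim disjE exE conjE)
      fix t2' assume "step t' t2'" "tower_cong t2 t2'"
      obtain n' where "n = Suc n'"
        using False steps u by (cases n) auto
      with steps have "(step ^^ n') t2 u"
        using \<open>step t t2\<close> step_deterministic by (metis relpowp_Suc_D2)
      moreover have "closed_below 0 t2"
        using steps_closed_below \<open>step t t2\<close> closed by blast
      ultimately obtain u' where "eval t2' u'" "(is_val u \<longrightarrow> is_val u') \<and> (control_stuck u \<longrightarrow> control_stuck u')"
        using less.IH[of n' t2 u t2'] \<open>n = Suc n'\<close> u \<open>tower_cong t2 t2'\<close> by blast
      with \<open>step t' t2'\<close> show ?thesis
        unfolding eval_def by (meson converse_rtranclp_into_rtranclp)
    next
      assume "towers_in_ctx t t'"
      then obtain E E' w w' a b where E: "ectx_ok E" "tower_cong_ctx E E'" "tower_cong w w'"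
        "t = plugE E (Rst (tower w (Suc a)))" "t' = plugE E' (Rst (tower w' (Suc b)))"
        unfolding towers_in_ctx_def by blast
      obtain m v k where m: "(step ^^ m) (Rst (App w I_trm)) v" "is_val v" "m < n"
        and k: "(step ^^ k) (plugE E I_trm) u" "k < n"
        using tower_eval_split[of n E w a u] steps u closed E(1,4) by blast
      have "closed_below 0 (Rst (tower w (Suc a)))"
        using closed_below_plugE_hole closed E(4) by blast
      then have "closed_below 0 (Rst (App w I_trm))"
        by (simp add: I_trm_def)
      moreover have "tower_cong (Rst (App w I_trm)) (Rst (App w' I_trm))"
        using E(3) by (intro tower_cong.intros tower_cong_refl)
      ultimately obtain v' where "eval (Rst (App w' I_trm)) v'" "is_val v'"
        using less.IH[OF m(3,1) val_irreducible[OF m(2)]] m(2) by blast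
      then have "step\<^sup>*\<^sup>* (Rst (tower w' (Suc b))) I_trm"
        using tower_collapses[of w' v' EHole "Suc b"] unfolding eval_def by simp
      then have "step\<^sup>*\<^sup>* t' (plugE E' I_trm)"
        using steps_plugE tower_cong_ctx_ectx_ok[OF E(2,1)] E(5) by blast
      moreover have "closed_below 0 (plugE E I_trm)"
        using closed E(4) closed_below_plugE_replace by (simp add: I_trm_def)
      moreover have "tower_cong (plugE E I_trm) (plugE E' I_trm)"
        using E(2) tower_cong_ctx_plugE tower_cong_refl by blast
      ultimately show ?thesis
        using less.IH[OF k(2) k(1) u] unfolding eval_def by (meson rtranclp_trans)
    qed
  qed
qed

lemma tower_cong_eval:
  "closed t \<Longrightarrow> tower_cong t t' \<Longrightarrow> eval t u \<Longrightarrow>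
   \<exists>u'. eval t' u' \<and> (is_val u \<longrightarrow> is_val u') \<and> (control_stuck u \<longrightarrow> control_stuck u')"
proof -
  assume "closed t" "tower_cong t t'" "eval t u"
  then obtain n where "(step ^^ n) t u" "irreducible u" "closed_below 0 t"
    unfolding eval_def closed_iff_closed_below_0 rtranclp_power by blast
  with \<open>tower_cong t t'\<close> show ?thesis using tower_cong_eval_sim by blast
qed

lemma tower_cong_imp_ctx_equiv: "tower_cong t0 t1 \<Longrightarrow> ctx_equiv t0 t1"
  unfolding ctx_equiv_def
  using tower_cong_plug tower_cong_sym tower_cong_eval by meson

section \<open>Failure of normal form bisimilarity\<close>

fun is_redex :: "trm \<Rightarrow> bool" where
  "is_redex (App (Lam b) v) = is_val v"
| "is_redex (Rst p) = (is_val p \<or> (\<exists>F b. pure F \<and> p = plugE F (Sft b)))"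
| "is_redex _ = False"

lemma contr_is_redex: "contr s s' \<Longrightarrow> is_redex s"
  by (induction rule: contr.induct) auto

lemma irreducibleI_no_redex:
  "(\<And>E s. ectx_ok E \<Longrightarrow> t = plugE E s \<Longrightarrow> is_redex s \<Longrightarrow> False) \<Longrightarrow> irreducible t"
  unfolding irreducible_def step_def using contr_is_redex by blast

lemma plugE_Sft_eq_App_iff:
  "plugE F (Sft b) = App p q \<longleftrightarrow>
     (\<exists>F'. F = EAppL F' q \<and> p = plugE F' (Sft b)) \<or> (\<exists>F'. F = EAppR p F' \<and> q = plugE F' (Sft b))"
  by (cases F) auto

lemma stuck_terms_irreducible:
  "irreducible (Rst (App (Rst (App (Var x) I_trm)) (Sft I_trm)))"
  "irreducible (Rst (App (Rst (App (Var x) I_trm)) (App (Rst (App (Var x) I_trm)) (Sft I_trm))))"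
  "irreducible (Rst (App (Var y) (App (Rst (App (Var x) I_trm)) (Sft I_trm))))"
  by (rule irreducibleI_no_redex; auto simp: I_trm_def plugE_Sft_eq_App_iff)+

lemma Rst_App_Var_Sft_I_eval: "eval (Rst (App (Var y) (Sft I_trm))) I_trm"
proof -
  have "step (Rst (plugE (EAppR (Var y) EHole) (Sft I_trm))) (Rst I_trm)"
    using contr.shift[of "EAppR (Var y) EHole" I_trm] contr_imp_step by simp
  moreover have "step (Rst I_trm) I_trm"
    using contr.reset[of I_trm] contr_imp_step by (simp add: I_trm_def)
  ultimately show ?thesis
    unfolding eval_def using val_irreducible[of I_trm] by (auto simp: I_trm_def)
qed

lemma nf_sim_irreducible:
  assumes "nf_sim R" "R t0 t1" "irreducible t0" "irreducible t1"
  shows "nf_rel R t0 t1"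
proof -
  obtain t1' where "eval t1 t1'" "nf_rel R t0 t1'"
    using assms(1-3) eval_irreducible unfolding nf_sim_def by blast
  with eval_irreducible[OF assms(4)] show ?thesis by simp
qed

lemma nf_rel_stuck_towers_relates_continuations:
  fixes x :: nat
  defines "a \<equiv> Rst (App (Var x) I_trm)"
  assumes "nf_rel R (Rst (App a (Sft I_trm))) (Rst (App a (App a (Sft I_trm))))"
  shows "R (Rst (App (Var (Suc x)) (Sft I_trm))) (Rst (App (Var (Suc x)) (App a (Sft I_trm))))"
proof -
  have "\<not> val_rel R (Rst (App a (Sft I_trm))) (Rst (App a (App a (Sft I_trm))))"
    by (simp add: val_rel_def)
  moreover have "\<not> (\<exists>F s. pure F \<and> Rst (App a (Sft I_trm)) = plugE F (Sft s))"
    using pure_plugE_Sft_neq_Rst by metis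
  ultimately obtain E0 E1 y v0 v1 where "ectx_ok E1"
    "Rst (App a (Sft I_trm)) = plugE E0 (App (Var y) v0)"
    "Rst (App a (App a (Sft I_trm))) = plugE E1 (App (Var y) v1)"
    "ectx_rel R E0 E1"
    using assms(2) unfolding nf_rel_def by blast
  then have E: "E0 = ERst (EAppL (ERst EHole) (Sft I_trm))"
    "E1 = ERst (EAppL (ERst EHole) (App a (Sft I_trm)))" "ectx_rel R E0 E1"
    unfolding a_def by (auto simp: I_trm_def)
  moreover have "\<not> pure E0" using E(1) by simp
  ultimately obtain E0' F0 E1' F1 where ctx: "pure F0" "pure F1"
    "E0 = compE E0' (ERst F0)" "E1 = compE E1' (ERst F1)"
    "\<forall>z. z \<notin> fvE E0 \<union> fvE E1 \<longrightarrow> R (plugE E0' (Var z)) (plugE E1' (Var z))"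
    unfolding ectx_rel_def by blast
  have "E0' = ERst (EAppL EHole (Sft I_trm))"
    using ctx(1,3) E(1) by (auto simp: ERst_eq_compE_iff EAppL_eq_compE_iff EHole_eq_compE_iff)
  moreover have "E1' = ERst (EAppL EHole (App a (Sft I_trm)))"
    using ctx(2,4) E(2) by (auto simp: ERst_eq_compE_iff EAppL_eq_compE_iff EHole_eq_compE_iff)
  moreover have "Suc x \<notin> fvE E0 \<union> fvE E1"
    using E(1,2) unfolding a_def by (auto simp: I_trm_def)
  ultimately show ?thesis
    using ctx(5) by auto
qed

lemma not_nf_bisimilar:
  fixes x :: nat
  defines "a \<equiv> Rst (App (Var x) I_trm)"
  shows "\<not> nf_bisimilar (Rst (App a (Sft I_trm))) (Rst (App a (App a (Sft I_trm))))"
proof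
  assume "nf_bisimilar (Rst (App a (Sft I_trm))) (Rst (App a (App a (Sft I_trm))))"
  then obtain R where sim: "nf_sim R" and R: "R (Rst (App a (Sft I_trm))) (Rst (App a (App a (Sft I_trm))))"
    unfolding nf_bisimilar_def nf_bisim_def by blast
  have "nf_rel R (Rst (App a (Sft I_trm))) (Rst (App a (App a (Sft I_trm))))"
    using nf_sim_irreducible[OF sim R] stuck_terms_irreducible unfolding a_def by blast
  then have "R (Rst (App (Var (Suc x)) (Sft I_trm))) (Rst (App (Var (Suc x)) (App a (Sft I_trm))))"
    unfolding a_def by (rule nf_rel_stuck_towers_relates_continuations)
  with sim obtain t' where "eval (Rst (App (Var (Suc x)) (App a (Sft I_trm)))) t'" "nf_rel R I_trm t'"
    using Rst_App_Var_Sft_I_eval unfolding nf_sim_def by blast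
  moreover have "irreducible (Rst (App (Var (Suc x)) (App a (Sft I_trm))))"
    unfolding a_def by (rule stuck_terms_irreducible(3))
  ultimately have "nf_rel R I_trm (Rst (App (Var (Suc x)) (App a (Sft I_trm))))"
    using eval_irreducible by simp
  then show False
    unfolding nf_rel_def val_rel_def by (auto simp: I_trm_def)
qed

theorem proposition1:
  fixes x :: nat
  defines "a \<equiv> Rst (App (Var x) I_trm)"
  shows "ctx_equiv (Rst (App a (Sft I_trm))) (Rst (App a (App a (Sft I_trm))))
         \<and> \<not> nf_bisimilar (Rst (App a (Sft I_trm))) (Rst (App a (App a (Sft I_trm))))"
proof
  have "tower_cong (Rst (App a (Sft I_trm))) (Rst (App a (App a (Sft I_trm))))"
    using tower_cong.tower[OF tower_cong.var, of x 0 "Suc 0"] unfolding a_def by simp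
  then show "ctx_equiv (Rst (App a (Sft I_trm))) (Rst (App a (App a (Sft I_trm))))"
    by (rule tower_cong_imp_ctx_equiv)
  show "\<not> nf_bisimilar (Rst (App a (Sft I_trm))) (Rst (App a (App a (Sft I_trm))))"
    unfolding a_def by (rule not_nf_bisimilar)
qed

end
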